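(* Let $V=\{x_1,\dots,x_n\}$ be a list of $n$ real numbers in the interval $[L,U]$ and let $k$ be an integer with $k<n$. Then a $k$-maximal variance subset of $V$ can be computed in $\mathcal{O}(n^2)$ time.
   Context: For a finite (multi)set $Q$ of reals with $|Q|=k$, its variance is $\mathrm{Var}[Q]=\frac{1}{k}\sum_{q\in Q}(q-\mu_Q)^2$ where $\mu_Q=\frac1k\sum_{q\in Q}q$. Given $V=\{x_1,\dots,x_n\}$ listed in ascending order and an integer $k<n$, a subset $Q\subset V$ (sub-multiset, i.e. a choice of $k$ of the $n$ entries) is a $k$-maximal variance subset of $V$ if $|Q|=k$ and $\mathrm{Var}[Q']\le\mathrm{Var}[Q]$ for every $Q'\subset V$ with $|Q'|=k$. *)

theory Defs
  imports Complex_Main "HOL-Library.Multiset"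
begin

definition mean_ms :: "real multiset \<Rightarrow> real" where
  "mean_ms Q = (\<Sum>q\<in>#Q. q) / real (size Q)"

definition var_ms :: "real multiset \<Rightarrow> real" where
  "var_ms Q = (\<Sum>q\<in>#Q. (q - mean_ms Q)^2) / real (size Q)"

definition k_max_var_subset :: "real multiset \<Rightarrow> real multiset \<Rightarrow> nat \<Rightarrow> bool" where
  "k_max_var_subset Q V k \<longleftrightarrow> Q \<subseteq># V \<and> size Q = k \<and>
     (\<forall>Q'. Q' \<subseteq># V \<and> size Q' = k \<longrightarrow> var_ms Q' \<le> var_ms Q)"

fun ins :: "real \<Rightarrow> real list \<Rightarrow> real list" where
  "ins x [] = [x]"
| "ins x (y # ys) = (if x \<le> y then x # y # ys else y # ins x ys)"

fun isort :: "real list \<Rightarrow> real list" where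
  "isort [] = []"
| "isort (x # xs) = ins x (isort xs)"

fun lsum :: "real list \<Rightarrow> real" where
  "lsum [] = 0"
| "lsum (x # xs) = x + lsum xs"

fun sqdev :: "real \<Rightarrow> real list \<Rightarrow> real" where
  "sqdev m [] = 0"
| "sqdev m (x # xs) = (x - m) * (x - m) + sqdev m xs"

fun lvar :: "real list \<Rightarrow> real" where
  "lvar ys = sqdev (lsum ys / real (length ys)) ys / real (length ys)"

fun cand :: "nat \<Rightarrow> nat \<Rightarrow> real list \<Rightarrow> real list" where
  "cand i k xs = take i xs @ drop (length xs - (k - i)) xs"

fun best :: "nat \<Rightarrow> nat \<Rightarrow> real list \<Rightarrow> real list" where
  "best 0 k xs = cand 0 k xs"
| "best (Suc i) k xs = (let c = cand (Suc i) k xs; r = best i k xs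
     in if lvar r \<le> lvar c then c else r)"

fun maxvar_alg :: "nat \<Rightarrow> real list \<Rightarrow> real list" where
  "maxvar_alg k xs = best k k (isort xs)"

text \<open>Step-count (running time) functions, written by hand in the style of the
  time_fun command of HOL-Library: every function call costs 1 plus the cost of the
  calls it makes; arithmetic and comparisons on reals are unit/zero cost (real-RAM model);
  the list primitives length, take, drop and append cost linear time as in
  HOL-Library.Time_Functions (length xs + 1, min n (length xs) + 1, length xs + 1).\<close>

fun T_ins :: "real \<Rightarrow> real list \<Rightarrow> nat" where
  "T_ins x [] = 1"
| "T_ins x (y # ys) = 1 + (if x \<le> y then 0 else T_ins x ys)"

fun T_isort :: "real list \<Rightarrow> nat" where
  "T_isort [] = 1"
| "T_isort (x # xs) = 1 + T_isort xs + T_ins x (isort xs)"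

fun T_lsum :: "real list \<Rightarrow> nat" where
  "T_lsum [] = 1"
| "T_lsum (x # xs) = 1 + T_lsum xs"

fun T_sqdev :: "real \<Rightarrow> real list \<Rightarrow> nat" where
  "T_sqdev m [] = 1"
| "T_sqdev m (x # xs) = 1 + T_sqdev m xs"

fun T_lvar :: "real list \<Rightarrow> nat" where
  "T_lvar ys = 1 + T_lsum ys + 2 * (length ys + 1)
     + T_sqdev (lsum ys / real (length ys)) ys"

fun T_cand :: "nat \<Rightarrow> nat \<Rightarrow> real list \<Rightarrow> nat" where
  "T_cand i k xs = 1 + (min i (length xs) + 1) + (length xs + 1)
     + (min (length xs - (k - i)) (length xs) + 1) + (length (take i xs) + 1)"

fun T_best :: "nat \<Rightarrow> nat \<Rightarrow> real list \<Rightarrow> nat" where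
  "T_best 0 k xs = 1 + T_cand 0 k xs"
| "T_best (Suc i) k xs = 1 + T_cand (Suc i) k xs + T_best i k xs
     + T_lvar (best i k xs) + T_lvar (cand (Suc i) k xs)"

fun T_maxvar_alg :: "nat \<Rightarrow> real list \<Rightarrow> nat" where
  "T_maxvar_alg k xs = 1 + T_isort xs + T_best k k (isort xs)"

end

theory Submission
  imports Defs
begin

text \<open>With all other elements fixed, the variance of a multiset is a convex quadratic function
  of any one of its elements, so moving that element to the smallest or to the largest value
  still available does not decrease the variance for at least one of the two choices. Applied
  repeatedly to the sorted input, this turns every k-element sub-multiset into one consisting of
  the i smallest and the k - i largest entries, for some i, without decreasing its variance.
  The algorithm insertion-sorts the input in quadratic time and compares these k + 1 candidates,
  each in linear time.\<close>

lemma add_mset_subset_eq_swap: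
  assumes "add_mset x R \<subseteq># M" "y \<in># M" "y \<notin># R"
  shows "add_mset y R \<subseteq># M"
  unfolding subseteq_mset_def
proof
  fix w
  have "R \<subseteq># M"
    using assms(1) by (rule subset_mset.order_trans[rotated]) simp
  then have R_le: "count R w \<le> count M w"
    by (simp add: mset_subset_eq_count)
  show "count (add_mset y R) w \<le> count M w"
  proof (cases "w = y")
    case True
    then show ?thesis
      using assms(2,3) by (simp add: not_in_iff Suc_le_eq)
  next
    case False
    then show ?thesis
      using R_le by simp
  qed
qed

definition elementwise_quasiconvex :: "('a::linorder multiset \<Rightarrow> 'b::linorder) \<Rightarrow> bool" where
  "elementwise_quasiconvex F \<longleftrightarrow>
     (\<forall>R a x c. a \<le> x \<longrightarrow> x \<le> c \<longrightarrow>
        F (add_mset x R) \<le> max (F (add_mset a R)) (F (add_mset c R)))"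

lemma elementwise_quasiconvex_add_mset:
  "elementwise_quasiconvex F \<Longrightarrow> elementwise_quasiconvex (\<lambda>Q. F (add_mset y Q))"
  unfolding elementwise_quasiconvex_def by (metis add_mset_commute)

lemma elementwise_quasiconvex_move_to_bound:
  assumes "elementwise_quasiconvex F" "Q \<subseteq># M" "Q \<noteq> {#}"
    and "a \<in># M" "c \<in># M" "a \<notin># Q" "c \<notin># Q" "\<forall>v \<in># Q. a \<le> v \<and> v \<le> c"
  shows "\<exists>Q'. Q' \<subseteq># M \<and> size Q' = size Q \<and> (a \<in># Q' \<or> c \<in># Q') \<and> F Q \<le> F Q'"
proof -
  obtain x R where Q: "Q = add_mset x R"
    using \<open>Q \<noteq> {#}\<close> multiset_cases by blast
  have "F Q \<le> max (F (add_mset a R)) (F (add_mset c R))"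
    using assms(1,8) unfolding Q elementwise_quasiconvex_def by simp
  moreover have "add_mset a R \<subseteq># M" "add_mset c R \<subseteq># M"
    using assms(2,4-7) by (auto simp: Q intro: add_mset_subset_eq_swap)
  ultimately show ?thesis
    unfolding le_max_iff_disj by (metis Q size_add_mset union_single_eq_member)
qed

declare cand.simps [simp del]

lemma cand_Cons: "k - i \<le> length zs \<Longrightarrow> cand (Suc i) (Suc k) (y # zs) = y # cand i k zs"
  by (simp add: cand.simps Suc_diff_le)

lemma cand_snoc: "i \<le> k \<Longrightarrow> k \<le> length ws \<Longrightarrow> cand i (Suc k) (ws @ [z]) = cand i k ws @ [z]"
  by (simp add: cand.simps Suc_diff_le)

text \<open>Quantifying over all F makes this inductive: taking an end element y of the list out of Q
  replaces F by \<^term>\<open>\<lambda>Q. F (add_mset y Q)\<close>.\<close>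
definition candidates_dominate :: "real list \<Rightarrow> bool" where
  "candidates_dominate ys \<longleftrightarrow>
     (\<forall>(F :: real multiset \<Rightarrow> real) Q. elementwise_quasiconvex F \<longrightarrow> Q \<subseteq># mset ys \<longrightarrow>
        (\<exists>i \<le> size Q. F Q \<le> F (mset (cand i (size Q) ys))))"

lemma candidates_dominateD:
  fixes F :: "real multiset \<Rightarrow> real"
  shows "candidates_dominate ys \<Longrightarrow> elementwise_quasiconvex F \<Longrightarrow> Q \<subseteq># mset ys \<Longrightarrow>
    \<exists>i \<le> size Q. F Q \<le> F (mset (cand i (size Q) ys))"
  unfolding candidates_dominate_def by blast

lemma candidates_dominate_Cons:
  fixes F :: "real multiset \<Rightarrow> real"
  assumes "candidates_dominate zs" "elementwise_quasiconvex F" "Q \<subseteq># mset (y # zs)" "y \<in># Q"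
  shows "\<exists>i \<le> size Q. F Q \<le> F (mset (cand i (size Q) (y # zs)))"
proof -
  obtain R where Q: "Q = add_mset y R"
    using \<open>y \<in># Q\<close> by (blast dest: multi_member_split)
  have R: "R \<subseteq># mset zs"
    using assms(3) by (simp add: Q)
  obtain i where "i \<le> size R" "F (add_mset y R) \<le> F (add_mset y (mset (cand i (size R) zs)))"
    using candidates_dominateD[OF assms(1) elementwise_quasiconvex_add_mset[OF assms(2)] R] by auto
  moreover have "size R \<le> length zs"
    using size_mset_mono[OF R] by simp
  ultimately show ?thesis
    by (intro exI[of _ "Suc i"]) (simp add: Q cand_Cons)
qed

lemma candidates_dominate_snoc:
  fixes F :: "real multiset \<Rightarrow> real"
  assumes "candidates_dominate ws" "elementwise_quasiconvex F" "Q \<subseteq># mset (ws @ [z])" "z \<in># Q"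
  shows "\<exists>i \<le> size Q. F Q \<le> F (mset (cand i (size Q) (ws @ [z])))"
proof -
  obtain R where Q: "Q = add_mset z R"
    using \<open>z \<in># Q\<close> by (blast dest: multi_member_split)
  have R: "R \<subseteq># mset ws"
    using assms(3) by (simp add: Q)
  obtain i where "i \<le> size R" "F (add_mset z R) \<le> F (add_mset z (mset (cand i (size R) ws)))"
    using candidates_dominateD[OF assms(1) elementwise_quasiconvex_add_mset[OF assms(2)] R] by auto
  moreover have "size R \<le> length ws"
    using size_mset_mono[OF R] by simp
  ultimately show ?thesis
    by (intro exI[of _ i]) (simp add: Q cand_snoc)
qed

lemma sorted_between_hd_last:
  assumes "sorted ys" "v \<in> set ys"
  shows "hd ys \<le> v \<and> v \<le> last ys"
proof
  show "hd ys \<le> v"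
    using assms by (cases ys) auto
  show "v \<le> last ys"
    using assms by (cases ys rule: rev_cases) (auto simp: sorted_append)
qed

lemma sorted_imp_candidates_dominate: "sorted ys \<Longrightarrow> candidates_dominate ys"
proof (induction "length ys" arbitrary: ys rule: less_induct)
  case less
  have "\<exists>i \<le> size Q. F Q \<le> F (mset (cand i (size Q) ys))"
    if F: "elementwise_quasiconvex F" and Q: "Q \<subseteq># mset ys" for F :: "real multiset \<Rightarrow> real" and Q
  proof (cases "Q = {#}")
    case True
    then show ?thesis by (simp add: cand.simps)
  next
    case False
    then have "ys \<noteq> []"
      using Q by auto
    then obtain y zs ws z where ys: "ys = y # zs" "ys = ws @ [z]"
      by (metis neq_Nil_conv rev_exhaust)
    have "candidates_dominate zs"
      using less.hyps[of zs] less.prems by (simp add: ys(1))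
    moreover have "candidates_dominate ws"
      using less.hyps[of ws] less.prems by (simp add: ys(2) sorted_append)
    ultimately have ends: "\<exists>i \<le> size Q'. F Q' \<le> F (mset (cand i (size Q') ys))"
      if "Q' \<subseteq># mset ys" "y \<in># Q' \<or> z \<in># Q'" for Q'
      using that candidates_dominate_Cons[OF _ F, of zs Q' y, folded ys(1)]
        candidates_dominate_snoc[OF _ F, of ws Q' z, folded ys(2)] by blast
    show ?thesis
    proof (cases "y \<in># Q \<or> z \<in># Q")
      case True
      then show ?thesis using ends Q by blast
    next
      case False
      have "hd ys = y" "last ys = z"
        by (simp add: ys(1), simp add: ys(2))
      then have "\<forall>v \<in># Q. y \<le> v \<and> v \<le> z"
        using sorted_between_hd_last[OF \<open>sorted ys\<close>] mset_subset_eqD[OF Q] by auto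
      moreover have "y \<in># mset ys" "z \<in># mset ys"
        by (simp add: ys(1), simp add: ys(2))
      ultimately obtain Q' where "Q' \<subseteq># mset ys" "size Q' = size Q" "y \<in># Q' \<or> z \<in># Q'" "F Q \<le> F Q'"
        using elementwise_quasiconvex_move_to_bound[OF F Q \<open>Q \<noteq> {#}\<close>] False by blast
      then show ?thesis
        using ends[of Q'] by (metis order_trans)
    qed
  qed
  then show ?case
    unfolding candidates_dominate_def by blast
qed

lemma quadratic_le_max_endpoints:
  fixes \<alpha> \<beta> \<gamma> a x c :: real
  assumes "\<alpha> \<ge> 0" "a \<le> x" "x \<le> c"
  shows "\<alpha> * x\<^sup>2 + \<beta> * x + \<gamma> \<le> max (\<alpha> * a\<^sup>2 + \<beta> * a + \<gamma>) (\<alpha> * c\<^sup>2 + \<beta> * c + \<gamma>)"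
proof -
  define g where "g t = \<alpha> * t\<^sup>2 + \<beta> * t + \<gamma>" for t
  define M where "M = max (g a) (g c)"
  have "(c - a) * g x = (c - x) * g a + (x - a) * g c - \<alpha> * (x - a) * (c - x) * (c - a)"
    by (simp add: g_def algebra_simps power2_eq_square)
  also have "\<dots> \<le> (c - x) * g a + (x - a) * g c"
    using assms by simp
  also have "\<dots> \<le> (c - x) * M + (x - a) * M"
    using assms by (intro add_mono mult_left_mono) (auto simp: M_def)
  finally have "(c - a) * g x \<le> (c - a) * M"
    by (simp add: algebra_simps)
  then show ?thesis
    using assms by (cases "a = c") (auto simp: g_def M_def)
qed

lemma var_ms_alt:
  assumes "size M > 0"
  shows "var_ms M = (\<Sum>q\<in>#M. q\<^sup>2) / size M - ((\<Sum>q\<in>#M. q) / size M)\<^sup>2"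
proof -
  define m where "m = mean_ms M"
  have "(\<Sum>q\<in>#M. (q - m)\<^sup>2) = (\<Sum>q\<in>#M. q\<^sup>2 + (- 2 * m) * q + m\<^sup>2)"
    by (simp add: power2_diff algebra_simps)
  also have "\<dots> = (\<Sum>q\<in>#M. q\<^sup>2) + (- 2 * m) * (\<Sum>q\<in>#M. q) + size M * m\<^sup>2"
    by (simp only: sum_mset.distrib sum_mset_distrib_left) simp
  finally have "var_ms M = ((\<Sum>q\<in>#M. q\<^sup>2) + (- 2 * m) * (\<Sum>q\<in>#M. q) + size M * m\<^sup>2) / size M"
    by (simp add: var_ms_def m_def)
  then show ?thesis
    using assms unfolding m_def mean_ms_def by (simp add: field_simps power2_eq_square)
qed

lemma elementwise_quasiconvex_var_ms: "elementwise_quasiconvex var_ms"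
  unfolding elementwise_quasiconvex_def
proof (intro allI impI)
  fix R :: "real multiset" and a x c :: real
  assume "a \<le> x" "x \<le> c"
  define n where "n = real (size R + 1)"
  define A where "A = (\<Sum>q\<in>#R. q\<^sup>2)"
  define B where "B = (\<Sum>q\<in>#R. q)"
  have n: "n \<ge> 1" by (simp add: n_def)
  have var_add: "var_ms (add_mset t R) = (1 / n - 1 / n\<^sup>2) * t\<^sup>2 + (- 2 * B / n\<^sup>2) * t + (A / n - B\<^sup>2 / n\<^sup>2)"
    for t
  proof -
    have "var_ms (add_mset t R) = (A + t\<^sup>2) / n - ((B + t) / n)\<^sup>2"
      by (subst var_ms_alt) (simp_all add: n_def A_def B_def add.commute)
    also have "\<dots> = (1 / n - 1 / n\<^sup>2) * t\<^sup>2 + (- 2 * B / n\<^sup>2) * t + (A / n - B\<^sup>2 / n\<^sup>2)"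
      using n by (simp add: field_simps power2_eq_square)
    finally show ?thesis .
  qed
  have "1 / n\<^sup>2 \<le> 1 / n"
    using n by (simp add: field_simps power2_eq_square)
  then show "var_ms (add_mset x R) \<le> max (var_ms (add_mset a R)) (var_ms (add_mset c R))"
    unfolding var_add using \<open>a \<le> x\<close> \<open>x \<le> c\<close> by (intro quadratic_le_max_endpoints) simp_all
qed

lemma ins_eq_insort: "ins x ys = insort x ys"
  by (induction ys) auto

lemma isort_eq_sort: "isort xs = sort xs"
  by (induction xs) (simp_all add: ins_eq_insort)

lemma lvar_eq_var_ms: "lvar xs = var_ms (mset xs)"
proof -
  have "lsum xs = (\<Sum>q\<in>#mset xs. q)"
    by (induction xs) auto
  moreover have "sqdev m xs = (\<Sum>q\<in>#mset xs. (q - m)\<^sup>2)" for m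
    by (induction xs) (auto simp: power2_eq_square)
  ultimately show ?thesis
    by (simp add: var_ms_def mean_ms_def)
qed

lemma mset_take_subseteq: "mset (take i xs) \<subseteq># mset xs"
proof -
  have "mset xs = mset (take i xs) + mset (drop i xs)"
    using mset_append[of "take i xs" "drop i xs"] by simp
  then show ?thesis
    by (simp add: mset_subset_eq_add_left)
qed

lemma mset_cand_subseteq:
  assumes "i \<le> k" "k \<le> length ys"
  shows "mset (cand i k ys) \<subseteq># mset ys"
proof -
  define p where "p = length ys - (k - i)"
  have "i \<le> p"
    using assms by (simp add: p_def)
  then have "take i ys = take i (take p ys)"
    by (simp add: min_absorb1)
  then have "mset (take i ys) \<subseteq># mset (take p ys)"
    by (metis mset_take_subseteq)
  then have "mset (take i ys) + mset (drop p ys) \<subseteq># mset (take p ys) + mset (drop p ys)"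
    by (rule mset_subset_eq_mono_add) simp
  then show ?thesis
    by (simp add: cand.simps p_def flip: mset_append)
qed

lemma length_cand: "i \<le> k \<Longrightarrow> k \<le> length ys \<Longrightarrow> length (cand i k ys) = k"
  by (simp add: cand.simps)

lemma best_in_cands: "\<exists>i \<le> m. best m k xs = cand i k xs"
  by (induction m) (auto simp: Let_def intro: le_SucI)

lemma lvar_cand_le_best: "i \<le> m \<Longrightarrow> lvar (cand i k xs) \<le> lvar (best m k xs)"
  by (induction m) (auto simp: Let_def le_Suc_eq simp del: lvar.simps)

theorem maxvar_alg_correct:
  assumes "k \<le> length xs"
  shows "k_max_var_subset (mset (maxvar_alg k xs)) (mset xs) k"
proof -
  define ys where "ys = sort xs"
  have ys: "sorted ys" "mset ys = mset xs" "length ys = length xs"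
    by (simp_all add: ys_def)
  obtain i where "i \<le> k" and best: "best k k ys = cand i k ys"
    using best_in_cands by blast
  have alg: "maxvar_alg k xs = cand i k ys"
    using best by (simp add: ys_def isort_eq_sort)
  have "mset (cand i k ys) \<subseteq># mset ys"
    using mset_cand_subseteq[OF \<open>i \<le> k\<close>] assms ys(3) by simp
  moreover have "size (mset (cand i k ys)) = k"
    using length_cand[OF \<open>i \<le> k\<close>] assms ys by simp
  moreover have "var_ms Q \<le> var_ms (mset (best k k ys))" if "Q \<subseteq># mset xs" "size Q = k" for Q
  proof -
    have "Q \<subseteq># mset ys"
      using that(1) ys(2) by simp
    then obtain j where "j \<le> k" and Q_le: "var_ms Q \<le> var_ms (mset (cand j k ys))"
      using candidates_dominateD[OF sorted_imp_candidates_dominate[OF \<open>sorted ys\<close>]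
          elementwise_quasiconvex_var_ms] \<open>size Q = k\<close> by blast
    have "var_ms (mset (cand j k ys)) \<le> var_ms (mset (best k k ys))"
      using lvar_cand_le_best[OF \<open>j \<le> k\<close>] by (simp add: lvar_eq_var_ms del: lvar.simps)
    with Q_le show ?thesis
      by (rule order_trans)
  qed
  ultimately show ?thesis
    unfolding k_max_var_subset_def alg by (simp add: best flip: ys(2))
qed

lemma T_ins_le: "T_ins x ys \<le> length ys + 1"
  by (induction ys) auto

lemma T_isort_le: "T_isort xs \<le> (length xs + 1)\<^sup>2"
proof (induction xs)
  case (Cons x xs)
  have "T_ins x (isort xs) \<le> length xs + 1"
    using T_ins_le[of x "isort xs"] by (simp add: isort_eq_sort)
  with Cons show ?case
    by (simp add: power2_eq_square)
qed simp

lemma T_lvar_eq: "T_lvar ys = 4 * length ys + 5"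
proof -
  have "T_lsum ys = length ys + 1" "T_sqdev m ys = length ys + 1" for m
    by (induction ys) auto
  then show ?thesis
    by simp
qed

lemma length_cand_le: "length (cand i k xs) \<le> 2 * length xs"
  by (simp add: cand.simps)

lemma T_best_le: "T_best m k xs \<le> (m + 1) * (20 * length xs + 16)"
proof (induction m)
  case 0
  then show ?case by simp
next
  case (Suc m)
  obtain i where "best m k xs = cand i k xs"
    using best_in_cands by blast
  then have "T_lvar (best m k xs) \<le> 8 * length xs + 5"
    unfolding T_lvar_eq using length_cand_le[of i k xs] by simp
  moreover have "T_lvar (cand (Suc m) k xs) \<le> 8 * length xs + 5"
    unfolding T_lvar_eq using length_cand_le[of "Suc m" k xs] by simp
  moreover have "T_cand (Suc m) k xs \<le> 4 * length xs + 5"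
    by simp
  ultimately show ?case
    using Suc.IH by simp
qed

lemma T_maxvar_alg_le:
  assumes "k < length xs"
  shows "T_maxvar_alg k xs \<le> 41 * (length xs)\<^sup>2"
proof -
  define n where "n = length xs"
  have "T_best k k (isort xs) \<le> (k + 1) * (20 * n + 16)"
    using T_best_le[of k k "isort xs"] by (simp add: n_def isort_eq_sort)
  also have "\<dots> \<le> n * (20 * n + 16)"
    using assms by (intro mult_le_mono1) (simp add: n_def)
  finally have "T_maxvar_alg k xs \<le> 1 + (n + 1)\<^sup>2 + n * (20 * n + 16)"
    using T_isort_le[of xs] by (simp add: n_def)
  also have "\<dots> = 21 * n\<^sup>2 + 18 * n + 2"
    by (simp add: power2_eq_square algebra_simps)
  also have "\<dots> \<le> 41 * n\<^sup>2"
  proof -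
    have "1 \<le> n"
      using assms by (simp add: n_def)
    then have "n \<le> n\<^sup>2" "1 \<le> n\<^sup>2"
      by (simp_all add: power2_eq_square)
    then show ?thesis
      by linarith
  qed
  finally show ?thesis
    by (simp add: n_def)
qed

theorem mainTheorem2:
  shows "(\<forall>(xs :: real list) (L :: real) (U :: real) (k :: nat).
            set xs \<subseteq> {L..U} \<and> k < length xs \<longrightarrow>
            k_max_var_subset (mset (maxvar_alg k xs)) (mset xs) k)
       \<and> (\<exists>c :: real. \<forall>(xs :: real list) (L :: real) (U :: real) (k :: nat).
            set xs \<subseteq> {L..U} \<and> k < length xs \<longrightarrow>
            real (T_maxvar_alg k xs) \<le> c * (real (length xs))^2)"
proof (intro conjI exI[of _ 41] allI impI)
  fix xs :: "real list" and L U :: real and k :: nat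
  assume "set xs \<subseteq> {L..U} \<and> k < length xs"
  then have "k < length xs" \<comment> \<open>the bounds L and U on the entries are not needed\<close>
    ..
  then show "k_max_var_subset (mset (maxvar_alg k xs)) (mset xs) k"
    by (intro maxvar_alg_correct) simp
  have "T_maxvar_alg k xs \<le> 41 * (length xs)\<^sup>2"
    using \<open>k < length xs\<close> by (rule T_maxvar_alg_le)
  then have "real (T_maxvar_alg k xs) \<le> real (41 * (length xs)\<^sup>2)"
    by (rule of_nat_mono)
  then show "real (T_maxvar_alg k xs) \<le> 41 * (real (length xs))^2"
    by simp
qed

end
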